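(* Let $\mathcal{G}=(\mathcal{V},\mathcal{E})$ be a finite graph and $x\in(0,\infty)^{\mathcal{V}}$ with $$\min_{\mathcal{G}'\subseteq\mathcal{G}}\mathfrak{K}_{\mathcal{G}'}(x|_{\mathcal{G}'})=0,$$ where $\mathcal{G}'$ runs over all induced subgraphs of $\mathcal{G}$. Let $\mathcal{G}_0=(\mathcal{V}_0,\mathcal{E}_0)$ be a minimal (with respect to inclusion) induced subgraph of $\mathcal{G}$ such that $\mathfrak{K}_{\mathcal{G}_0}(x|_{\mathcal{G}_0})=0$. Then $\mathcal{G}$ decomposes as the graph join of $\mathcal{G}_0$ with the complementary induced subgraph $\mathcal{G}_1$ on $\mathcal{V}\setminus\mathcal{V}_0$; i.e. every vertex of $\mathcal{V}\setminus\mathcal{V}_0$ is adjacent to every vertex of $\mathcal{V}_0$.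
   Context: Graphs are finite, simple, undirected. A clique is a set of pairwise adjacent vertices (the empty set is a clique). An induced subgraph $\mathcal{G}'$ has vertex set $\mathcal{V}'\subseteq\mathcal{V}$ and all edges of $\mathcal{G}$ between vertices of $\mathcal{V}'$; $x|_{\mathcal{G}'}=(x_v)_{v\in\mathcal{V}'}$. $\mathfrak{K}_{\mathcal{G}}(x)=\sum_{\mathcal{K}\subseteq\mathcal{V}\text{ clique}}(-1)^{|\mathcal{K}|}\prod_{v\in\mathcal{K}}x_v$, the empty clique contributing $1$. The graph join of graphs with disjoint vertex sets $\mathcal{V}_0,\mathcal{V}_1$ has vertex set $\mathcal{V}_0\sqcup\mathcal{V}_1$, two vertices adjacent iff adjacent within the same piece or lying in different pieces. *)

theory Defs
  imports Complex_Main
begin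

text \<open>A finite simple graph is given by a finite vertex set V and an edge relation E
  that is symmetric and irreflexive (on V). Induced subgraphs are identified with
  their vertex sets U \<subseteq> V.\<close>

definition simple_graph :: "'a set \<Rightarrow> ('a \<Rightarrow> 'a \<Rightarrow> bool) \<Rightarrow> bool" where
  "simple_graph V E \<longleftrightarrow> finite V \<and> (\<forall>u v. E u v \<longrightarrow> E v u) \<and> (\<forall>v. \<not> E v v)"

definition is_clique :: "('a \<Rightarrow> 'a \<Rightarrow> bool) \<Rightarrow> 'a set \<Rightarrow> bool" where
  "is_clique E K \<longleftrightarrow> (\<forall>u\<in>K. \<forall>v\<in>K. u \<noteq> v \<longrightarrow> E u v)"

definition clique_poly :: "'a set \<Rightarrow> ('a \<Rightarrow> 'a \<Rightarrow> bool) \<Rightarrow> ('a \<Rightarrow> real) \<Rightarrow> real" where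
  "clique_poly U E x = (\<Sum>K\<in>{K. K \<subseteq> U \<and> is_clique E K}. (-1) ^ card K * (\<Prod>v\<in>K. x v))"

end

theory Submission
  imports Defs
begin

text \<open>Splitting the cliques of the induced subgraph on U + u according to whether
  they contain u gives the vertex recursion
  \<open>K(U + u) = K(U) - x u * K(N(u) \<inter> U)\<close>. If u lies outside V0 and misses some vertex of V0,
  then \<open>N(u) \<inter> V0\<close> is a proper subset of V0, so by minimality and the nonnegativity hypothesis
  its clique polynomial is positive, and the recursion makes the clique polynomial of
  \<open>V0 + u\<close> negative, a contradiction.\<close>

lemma cliques_insert:
  assumes "u \<notin> U" and "symp E"
  shows "{K. K \<subseteq> insert u U \<and> is_clique E K} =
    {K. K \<subseteq> U \<and> is_clique E K} \<union> insert u ` {K. K \<subseteq> {w\<in>U. E u w} \<and> is_clique E K}"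
    (is "?lhs = ?without \<union> insert u ` ?with")
proof (intro equalityI subsetI)
  fix K assume K: "K \<in> ?lhs"
  show "K \<in> ?without \<union> insert u ` ?with"
  proof (cases "u \<in> K")
    case True
    then have "K = insert u (K - {u})" and "K - {u} \<in> ?with"
      using K assms(1) unfolding is_clique_def by auto
    then show ?thesis by blast
  qed (use K in blast)
next
  fix K assume "K \<in> ?without \<union> insert u ` ?with"
  then show "K \<in> ?lhs"
    using assms(2) unfolding is_clique_def by (auto dest: sympD)
qed

lemma clique_poly_insert:
  assumes "finite U" and "u \<notin> U" and "symp E"
  shows "clique_poly (insert u U) E x = clique_poly U E x - x u * clique_poly {w\<in>U. E u w} E x"
proof -
  let ?f = "\<lambda>K. (-1) ^ card K * (\<Prod>v\<in>K. x v)"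
  let ?without = "{K. K \<subseteq> U \<and> is_clique E K}"
  let ?with = "{K. K \<subseteq> {w\<in>U. E u w} \<and> is_clique E K}"
  have fin_without: "finite ?without" and fin_with: "finite ?with"
    using assms(1) by (auto intro: finite_subset[OF _ finite_Collect_subsets])
  have inj: "inj_on (insert u) ?with"
    using assms(2) by (intro inj_onI) (metis (no_types, lifting) insert_ident mem_Collect_eq subset_iff)
  have insert_term: "?f (insert u K) = - x u * ?f K" if "K \<in> ?with" for K
  proof -
    have "finite K" and "u \<notin> K"
      using that assms(1,2) by (auto intro: finite_subset)
    then show ?thesis by simp
  qed
  have "clique_poly (insert u U) E x = sum ?f ?without + sum ?f (insert u ` ?with)"
    unfolding clique_poly_def cliques_insert[OF assms(2,3)]
    using fin_without fin_with assms(2) by (intro sum.union_disjoint) auto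
  also have "sum ?f (insert u ` ?with) = (\<Sum>K\<in>?with. - x u * ?f K)"
    using inj insert_term by (simp add: sum.reindex)
  finally show ?thesis
    unfolding clique_poly_def by (simp add: sum_distrib_left sum_negf)
qed

theorem lemma4p5:
  fixes V :: "'a set" and E :: "'a \<Rightarrow> 'a \<Rightarrow> bool" and x :: "'a \<Rightarrow> real" and V0 :: "'a set"
  assumes graph: "simple_graph V E"
    and pos: "\<forall>v\<in>V. x v > 0"
    and min_zero: "(\<forall>U. U \<subseteq> V \<longrightarrow> clique_poly U E x \<ge> 0) \<and> (\<exists>U. U \<subseteq> V \<and> clique_poly U E x = 0)"
    and V0_sub: "V0 \<subseteq> V"
    and V0_zero: "clique_poly V0 E x = 0"
    and V0_minimal: "\<forall>U. U \<subset> V0 \<longrightarrow> clique_poly U E x \<noteq> 0"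
  shows "\<forall>u\<in>V - V0. \<forall>v\<in>V0. E u v"
proof (intro ballI, rule ccontr)
  fix u v assume u: "u \<in> V - V0" and v: "v \<in> V0" and not_adj: "\<not> E u v"
  let ?N = "{w\<in>V0. E u w}"
  have "finite V0" and "symp E"
    using graph V0_sub unfolding simple_graph_def by (auto intro: finite_subset sympI)
  have "?N \<subset> V0" using v not_adj by blast
  then have "clique_poly ?N E x > 0"
    using V0_minimal min_zero V0_sub by (metis order_le_less psubset_imp_subset subset_trans)
  moreover have "x u > 0" using pos u by blast
  ultimately have "clique_poly (insert u V0) E x < 0"
    using clique_poly_insert[OF \<open>finite V0\<close> _ \<open>symp E\<close>] u V0_zero by simp
  moreover have "clique_poly (insert u V0) E x \<ge> 0" using min_zero u V0_sub by blast
  ultimately show False by linarith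
qed

end
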